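(* Let $n\ge 3$. Then $\mathit{DCD}(n)$ is isomorphic to an incidence sum $\mathcal C_1\oplus_I\mathcal C_2$ such that: (1) $\mathcal C_1$ is a configuration of type $\left(\binom{2n-2}{n-2}_n,\ \binom{2n-2}{n-1}_{n-1}\right)$; (2) $\mathcal C_2$ is a configuration of type $\left(\binom{2n-2}{n-1}_{n-1},\ \binom{2n-2}{n-2}_n\right)$; (3) the set $I$ of new incidences consists of $\binom{2n-2}{n-1}$ point-line pairs whose points belong to $\mathcal C_2$ and whose lines belong to $\mathcal C_1$; (4) $\mathcal C_1$ and $\mathcal C_2$ are dual to each other; (5) $\mathcal C_1$ and $\mathcal C_2$ are flag-transitive.
   Context: $\mathit{DCD}(n)$: the combinatorial configuration whose points are the $n$-subsets and whose lines are the $(n-1)$-subsets of $\{1,\dots,2n-1\}$, a point being incident with a line iff the line's subset is contained in the point's subset (equivalently, the points and lines cut out by $2n-1$ hyperplanes in general position in projective $n$-space, by $n$ and by $n-1$ of them respectively). A configuration of type $(p_q, b_k)$ is an incidence structure with $p$ points and $b$ lines (blocks), each point incident with exactly $q$ lines and each line with exactly $k$ points. Incidence sum: given configurations $\mathcal C_1,\mathcal C_2$ with point sets $\mathcal P_1,\mathcal P_2$ and line sets $\mathcal L_1,\mathcal L_2$, and a set $I\subseteq \mathcal P_1\times\mathcal L_2\cup\mathcal P_2\times\mathcal L_1$, the incidence sum $\mathcal C_1\oplus_I\mathcal C_2$ is the incidence structure with points $\mathcal P_1\sqcup\mathcal P_2$, lines $\mathcal L_1\sqcup\mathcal L_2$,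 and incidences those of $\mathcal C_1$, those of $\mathcal C_2$, and the pairs in $I$. Two configurations are dual to each other if one is isomorphic to the other with the roles of points and lines interchanged. A configuration is flag-transitive if its automorphism group (incidence-preserving bijections of points and of lines) acts transitively on the set of incident point-line pairs. *)

theory Defs
  imports Main
begin

text \<open>An incidence structure: a set of points, a set of lines (blocks) and an
incidence predicate (only its restriction to points \<times> lines matters).\<close>
record ('p, 'l) incidence_structure =
  pts :: "'p set"
  lns :: "'l set"
  inc :: "'p \<Rightarrow> 'l \<Rightarrow> bool"

definition DCD :: "nat \<Rightarrow> (nat set, nat set) incidence_structure" where
  "DCD n = \<lparr> pts = {S. S \<subseteq> {1..2*n-1} \<and> card S = n},
             lns = {S. S \<subseteq> {1..2*n-1} \<and> card S = n - 1},
             inc = (\<lambda>P L. L \<subseteq> P) \<rparr>"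

definition is_configuration ::
  "('p, 'l) incidence_structure \<Rightarrow> nat \<Rightarrow> nat \<Rightarrow> nat \<Rightarrow> nat \<Rightarrow> bool" where
  "is_configuration C p q b k \<longleftrightarrow>
     finite (pts C) \<and> finite (lns C) \<and> card (pts C) = p \<and> card (lns C) = b \<and>
     (\<forall>x\<in>pts C. card {L\<in>lns C. inc C x L} = q) \<and>
     (\<forall>L\<in>lns C. card {x\<in>pts C. inc C x L} = k)"

text \<open>Incidence sum C1 \<oplus>_I C2 (disjoint union via sum types).
The set I is required (in the theorem) to lie in P1 \<times> L2 \<union> P2 \<times> L1.\<close>
definition incidence_sum ::
  "('p1, 'l1) incidence_structure \<Rightarrow> ((('p1 + 'p2) \<times> ('l1 + 'l2)) set) \<Rightarrow>
   ('p2, 'l2) incidence_structure \<Rightarrow> ('p1 + 'p2, 'l1 + 'l2) incidence_structure" where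
  "incidence_sum C1 I C2 = \<lparr> pts = pts C1 <+> pts C2, lns = lns C1 <+> lns C2,
     inc = (\<lambda>x L. case (x, L) of
              (Inl p, Inl l) \<Rightarrow> inc C1 p l
            | (Inr p, Inr l) \<Rightarrow> inc C2 p l
            | _ \<Rightarrow> (x, L) \<in> I) \<rparr>"

definition valid_sum_set ::
  "('p1, 'l1) incidence_structure \<Rightarrow> ((('p1 + 'p2) \<times> ('l1 + 'l2)) set) \<Rightarrow>
   ('p2, 'l2) incidence_structure \<Rightarrow> bool" where
  "valid_sum_set C1 I C2 \<longleftrightarrow>
     I \<subseteq> {(Inl x, Inr L) | x L. x \<in> pts C1 \<and> L \<in> lns C2}
        \<union> {(Inr x, Inl L) | x L. x \<in> pts C2 \<and> L \<in> lns C1}"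

definition isomorphic ::
  "('p1, 'l1) incidence_structure \<Rightarrow> ('p2, 'l2) incidence_structure \<Rightarrow> bool" where
  "isomorphic C D \<longleftrightarrow> (\<exists>f g. bij_betw f (pts C) (pts D) \<and> bij_betw g (lns C) (lns D) \<and>
     (\<forall>x\<in>pts C. \<forall>L\<in>lns C. inc D (f x) (g L) \<longleftrightarrow> inc C x L))"

definition dual_structure :: "('p, 'l) incidence_structure \<Rightarrow> ('l, 'p) incidence_structure" where
  "dual_structure C = \<lparr> pts = lns C, lns = pts C, inc = (\<lambda>L x. inc C x L) \<rparr>"

definition dual_to ::
  "('p1, 'l1) incidence_structure \<Rightarrow> ('p2, 'l2) incidence_structure \<Rightarrow> bool" where
  "dual_to C D \<longleftrightarrow> isomorphic C (dual_structure D)"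

definition automorphism :: "('p, 'l) incidence_structure \<Rightarrow> ('p \<Rightarrow> 'p) \<Rightarrow> ('l \<Rightarrow> 'l) \<Rightarrow> bool" where
  "automorphism C f g \<longleftrightarrow> bij_betw f (pts C) (pts C) \<and> bij_betw g (lns C) (lns C) \<and>
     (\<forall>x\<in>pts C. \<forall>L\<in>lns C. inc C (f x) (g L) \<longleftrightarrow> inc C x L)"

definition flags :: "('p, 'l) incidence_structure \<Rightarrow> ('p \<times> 'l) set" where
  "flags C = {(x, L). x \<in> pts C \<and> L \<in> lns C \<and> inc C x L}"

definition flag_transitive :: "('p, 'l) incidence_structure \<Rightarrow> bool" where
  "flag_transitive C \<longleftrightarrow> (\<forall>(x, L)\<in>flags C. \<forall>(y, M)\<in>flags C.
     \<exists>f g. automorphism C f g \<and> f x = y \<and> g L = M)"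

end

theory Submission
  imports Defs
begin

text \<open>Single out the element m = 2n-1 of {1..2n-1} and let A = {1..2n-2}. A subset of
A \<union> {m} either avoids m, or is T \<union> {m} with T \<subseteq> A one element smaller. Hence the points and
lines of DCD(n) avoiding m form the structure C1 of n-subsets and (n-1)-subsets of A, those
containing m form the structure C2 of (n-1)-subsets and (n-2)-subsets of A, and the only
incidences between the two parts join the point T \<union> {m} of C2 to the line T of C1.
Complementation in A turns C1 into the dual of C2, and any two nested pairs L \<subseteq> P of
subsets of A with the same sizes are related by a permutation of A, which gives
flag-transitivity.\<close>

abbreviation ksubsets :: "'a set \<Rightarrow> nat \<Rightarrow> 'a set set" where
  "ksubsets A k \<equiv> {S. S \<subseteq> A \<and> card S = k}"

definition subset_structure :: "'a set \<Rightarrow> nat \<Rightarrow> nat \<Rightarrow> ('a set, 'a set) incidence_structure" where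
  "subset_structure A a b = \<lparr> pts = ksubsets A a, lns = ksubsets A b, inc = (\<lambda>P L. L \<subseteq> P) \<rparr>"

lemma subset_structure_simps [simp]:
  "pts (subset_structure A a b) = ksubsets A a"
  "lns (subset_structure A a b) = ksubsets A b"
  "inc (subset_structure A a b) = (\<lambda>P L. L \<subseteq> P)"
  by (simp_all add: subset_structure_def)

lemma DCD_eq_subset_structure: "DCD n = subset_structure {1..2*n-1} n (n-1)"
  by (simp add: DCD_def subset_structure_def)

lemma card_ksupersets:
  assumes "finite A" "L \<subseteq> A" "b \<le> a" "card L = b"
  shows "card {S \<in> ksubsets A a. L \<subseteq> S} = (card A - b) choose (a - b)"
proof -
  have "finite L" using assms(1,2) by (rule finite_subset[rotated])
  have "{S \<in> ksubsets A a. L \<subseteq> S} = (\<lambda>T. T \<union> L) ` ksubsets (A - L) (a - b)"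
  proof (intro equalityI subsetI)
    fix S assume S: "S \<in> {S \<in> ksubsets A a. L \<subseteq> S}"
    then have "finite S" using assms(1) finite_subset by blast
    then have "card (S - L) = a - b" using S assms(4) \<open>finite L\<close> by (simp add: card_Diff_subset)
    moreover have "S = (S - L) \<union> L" using S by blast
    ultimately show "S \<in> (\<lambda>T. T \<union> L) ` ksubsets (A - L) (a - b)" using S by blast
  next
    fix S assume "S \<in> (\<lambda>T. T \<union> L) ` ksubsets (A - L) (a - b)"
    then obtain T where T: "T \<subseteq> A - L" "card T = a - b" "S = T \<union> L" by blast
    then have "finite T" using assms(1) finite_subset by blast
    moreover have "T \<inter> L = {}" using T(1) by blast
    ultimately have "card S = a" using T \<open>finite L\<close> assms(3,4) by (simp add: card_Un_disjoint)
    then show "S \<in> {S \<in> ksubsets A a. L \<subseteq> S}" using T assms(2) by blast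
  qed
  moreover have "inj_on (\<lambda>T. T \<union> L) (ksubsets (A - L) (a - b))"
    by (auto simp: inj_on_def)
  ultimately show ?thesis
    using assms by (simp add: card_image n_subsets card_Diff_subset \<open>finite L\<close>)
qed

lemma subset_structure_is_configuration:
  assumes "finite A" "b \<le> a"
  shows "is_configuration (subset_structure A a b)
           (card A choose a) (a choose b) (card A choose b) ((card A - b) choose (a - b))"
  unfolding is_configuration_def
proof (intro conjI ballI)
  fix P assume "P \<in> pts (subset_structure A a b)"
  then have "{L \<in> lns (subset_structure A a b). inc (subset_structure A a b) P L} = ksubsets P b"
    and "finite P" "card P = a"
    using assms(1) finite_subset by auto
  then show "card {L \<in> lns (subset_structure A a b). inc (subset_structure A a b) P L} = a choose b"
    by (simp add: n_subsets)
next
  fix L assume "L \<in> lns (subset_structure A a b)"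
  then show "card {P \<in> pts (subset_structure A a b). inc (subset_structure A a b) P L}
               = (card A - b) choose (a - b)"
    using card_ksupersets[OF assms(1) _ assms(2)] by simp
qed (use assms(1) n_subsets in auto)

corollary subset_structure_consecutive_is_configuration:
  assumes "finite A" "a \<ge> 1"
  shows "is_configuration (subset_structure A a (a - 1))
           (card A choose a) a (card A choose (a - 1)) (card A - (a - 1))"
proof -
  have "a choose (a - 1) = a" "(card A - (a - 1)) choose (a - (a - 1)) = card A - (a - 1)"
    using assms(2) binomial_symmetric[of "a - 1" a] by (simp_all add: choose_one)
  then show ?thesis
    using subset_structure_is_configuration[OF assms(1), of "a - 1" a] by simp
qed

lemma bij_betw_image_ksubsets:
  assumes "bij_betw s A B"
  shows "bij_betw (image s) (ksubsets A k) (ksubsets B k)"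
proof (rule bij_betw_subset[OF bij_betw_Pow[OF assms]])
  have "inj_on s A" using assms by (rule bij_betw_imp_inj_on)
  then have "card (s ` S) = card S" if "S \<subseteq> A" for S
    using that by (meson card_image inj_on_subset)
  then show "image s ` ksubsets A k = ksubsets B k"
    using assms by (auto simp: bij_betw_def elim!: subset_imageE)
qed auto

lemma automorphism_subset_structure:
  assumes "bij_betw s A A"
  shows "automorphism (subset_structure A a b) (image s) (image s)"
  unfolding automorphism_def
proof (intro conjI ballI)
  fix P L assume "P \<in> pts (subset_structure A a b)" "L \<in> lns (subset_structure A a b)"
  then have "P \<subseteq> A" "L \<subseteq> A" by simp_all
  moreover have "inj_on s A" using assms by (rule bij_betw_imp_inj_on)
  ultimately have "s ` L \<subseteq> s ` P \<longleftrightarrow> L \<subseteq> P"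
    by (metis image_mono inv_into_image_cancel)
  then show "inc (subset_structure A a b) (s ` P) (s ` L) \<longleftrightarrow> inc (subset_structure A a b) P L"
    by simp
qed (simp_all add: bij_betw_image_ksubsets assms)

lemma ex_permutation_mapping_chain:
  assumes "finite A" "L \<subseteq> P" "P \<subseteq> A" "L' \<subseteq> P'" "P' \<subseteq> A"
    and "card L = card L'" "card P = card P'"
  obtains s where "bij_betw s A A" "s ` L = L'" "s ` P = P'"
proof -
  have fin: "finite P" "finite P'" "finite L" "finite L'"
    using assms(1-5) finite_subset by metis+
  obtain s1 where s1: "bij_betw s1 L L'"
    using finite_same_card_bij fin(3,4) assms(6) by blast
  obtain s2 where s2: "bij_betw s2 (P - L) (P' - L')"
    using finite_same_card_bij fin assms(2,4,6,7) by (metis card_Diff_subset finite_Diff)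
  obtain s3 where s3: "bij_betw s3 (A - P) (A - P')"
    using finite_same_card_bij assms(1,3,5,7) fin(1,2) by (metis card_Diff_subset finite_Diff)
  define t where "t x = (if x \<in> L then s1 x else s2 x)" for x
  define s where "s x = (if x \<in> P then t x else s3 x)" for x
  have "bij_betw t (L \<union> (P - L)) (L' \<union> (P' - L'))"
    unfolding t_def by (rule bij_betw_disjoint_Un[OF s1 s2]) blast+
  then have t: "bij_betw t P P'"
    using assms(2,4) by (simp add: Un_absorb1)
  then have "bij_betw s (P \<union> (A - P)) (P' \<union> (A - P'))"
    unfolding s_def by (rule bij_betw_disjoint_Un[OF _ s3]) blast+
  then have "bij_betw s A A"
    using assms(3,5) by (simp add: Un_absorb1)
  moreover have "s ` L = L'" "s ` P = P'"
    using s1 t assms(2) by (auto simp: bij_betw_def s_def t_def)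
  ultimately show ?thesis using that by blast
qed

lemma flag_transitive_subset_structure:
  assumes "finite A"
  shows "flag_transitive (subset_structure A a b)"
  unfolding flag_transitive_def
proof clarify
  fix P L P' L'
  assume "(P, L) \<in> flags (subset_structure A a b)" "(P', L') \<in> flags (subset_structure A a b)"
  then have "L \<subseteq> P" "P \<subseteq> A" "L' \<subseteq> P'" "P' \<subseteq> A" "card L = card L'" "card P = card P'"
    by (auto simp: flags_def)
  then obtain s where "bij_betw s A A" "s ` L = L'" "s ` P = P'"
    by (metis assms ex_permutation_mapping_chain)
  then show "\<exists>f g. automorphism (subset_structure A a b) f g \<and> f P = P' \<and> g L = L'"
    using automorphism_subset_structure by blast
qed

lemma bij_betw_complement_ksubsets:
  assumes "finite A" "k \<le> card A"
  shows "bij_betw (\<lambda>S. A - S) (ksubsets A k) (ksubsets A (card A - k))"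
proof (rule bij_betw_byWitness[where f' = "\<lambda>S. A - S"])
  show "(\<lambda>S. A - S) ` ksubsets A k \<subseteq> ksubsets A (card A - k)"
    "(\<lambda>S. A - S) ` ksubsets A (card A - k) \<subseteq> ksubsets A k"
    using assms by (auto simp: card_Diff_subset finite_subset)
qed auto

lemma subset_structure_dual:
  assumes "finite A" "a \<le> card A" "b \<le> card A"
  shows "dual_to (subset_structure A a b) (subset_structure A (card A - b) (card A - a))"
  unfolding dual_to_def isomorphic_def
proof (intro exI conjI ballI)
  show "bij_betw (\<lambda>S. A - S) (pts (subset_structure A a b))
          (pts (dual_structure (subset_structure A (card A - b) (card A - a))))"
    "bij_betw (\<lambda>S. A - S) (lns (subset_structure A a b))
          (lns (dual_structure (subset_structure A (card A - b) (card A - a))))"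
    using bij_betw_complement_ksubsets assms by (simp_all add: dual_structure_def)
qed (auto simp: dual_structure_def)

definition split_off :: "'a \<Rightarrow> 'a set \<Rightarrow> 'a set + 'a set" where
  "split_off m S = (if m \<in> S then Inr (S - {m}) else Inl S)"

lemma bij_betw_split_off:
  assumes "finite A" "m \<notin> A" "k \<ge> 1"
  shows "bij_betw (split_off m) (ksubsets (insert m A) k) (ksubsets A k <+> ksubsets A (k - 1))"
proof (rule bij_betw_byWitness[where f' = "case_sum id (insert m)"])
  show "split_off m ` ksubsets (insert m A) k \<subseteq> ksubsets A k <+> ksubsets A (k - 1)"
  proof clarify
    fix S assume "S \<subseteq> insert m A" "k = card S"
    moreover have "finite S" using \<open>k = card S\<close> assms(3) by (simp add: card_ge_0_finite)
    ultimately show "split_off m S \<in> ksubsets A (card S) <+> ksubsets A (card S - 1)"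
      by (auto simp: split_off_def)
  qed
  show "case_sum id (insert m) ` (ksubsets A k <+> ksubsets A (k - 1)) \<subseteq> ksubsets (insert m A) k"
  proof clarify
    fix x assume "x \<in> ksubsets A k <+> ksubsets A (k - 1)"
    then show "case_sum id (insert m) x \<subseteq> insert m A \<and> card (case_sum id (insert m) x) = k"
    proof (rule PlusE)
      fix T assume T: "T \<in> ksubsets A (k - 1)" "x = Inr T"
      then have "finite T" "m \<notin> T" using assms(1,2) finite_subset by auto
      then show ?thesis using T assms(3) by auto
    qed auto
  qed
qed (use assms(2) in \<open>auto simp: split_off_def\<close>)

lemma subset_structure_insert_isomorphic_sum:
  assumes "finite A" "m \<notin> A" "a \<ge> 2"
  shows "isomorphic (subset_structure (insert m A) a (a - 1))
           (incidence_sum (subset_structure A a (a - 1))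
              ((\<lambda>T. (Inr T, Inl T)) ` ksubsets A (a - 1))
              (subset_structure A (a - 1) (a - 2)))"
    (is "isomorphic ?D (incidence_sum ?C1 ?I ?C2)")
  unfolding isomorphic_def
proof (intro exI conjI ballI)
  show "bij_betw (split_off m) (pts ?D) (pts (incidence_sum ?C1 ?I ?C2))"
    using bij_betw_split_off[OF assms(1,2), of a] assms(3) by (simp add: incidence_sum_def)
  show "bij_betw (split_off m) (lns ?D) (lns (incidence_sum ?C1 ?I ?C2))"
    using bij_betw_split_off[OF assms(1,2), of "a - 1"] assms(3)
    by (simp add: incidence_sum_def numeral_2_eq_2)
next
  fix S L assume S: "S \<in> pts ?D" and L: "L \<in> lns ?D"
  consider "m \<notin> S" "m \<notin> L" | "m \<in> S" "m \<in> L" | "m \<notin> S" "m \<in> L" | "m \<in> S" "m \<notin> L"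
    by blast
  then show "inc (incidence_sum ?C1 ?I ?C2) (split_off m S) (split_off m L) \<longleftrightarrow> inc ?D S L"
  proof cases
    case 2
    then show ?thesis by (auto simp: split_off_def incidence_sum_def)
  next
    case 4
    have "L \<subseteq> S \<longleftrightarrow> L = S - {m}"
    proof
      assume "L \<subseteq> S"
      then have "L \<subseteq> S - {m}" using 4 by blast
      moreover have "finite S" using S assms(1) finite_subset by auto
      ultimately show "L = S - {m}" using S L 4 by (simp add: card_subset_eq)
    qed (use 4 in blast)
    moreover have "L \<in> ksubsets A (a - 1)" using L 4 by auto
    ultimately show ?thesis using 4 by (auto simp: split_off_def incidence_sum_def)
  qed (auto simp: split_off_def incidence_sum_def)
qed

theorem theorem4p1:
  fixes n :: nat
  assumes "n \<ge> 3"
  shows "\<exists>(C1 :: (nat set, nat set) incidence_structure)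
            (C2 :: (nat set, nat set) incidence_structure) I.
     valid_sum_set C1 I C2 \<and>
     isomorphic (DCD n) (incidence_sum C1 I C2) \<and>
     is_configuration C1 ((2*n-2) choose (n-2)) n ((2*n-2) choose (n-1)) (n-1) \<and>
     is_configuration C2 ((2*n-2) choose (n-1)) (n-1) ((2*n-2) choose (n-2)) n \<and>
     I \<subseteq> {(Inr x, Inl L) | x L. x \<in> pts C2 \<and> L \<in> lns C1} \<and>
     card I = (2*n-2) choose (n-1) \<and>
     dual_to C1 C2 \<and>
     flag_transitive C1 \<and> flag_transitive C2"
proof -
  define A where "A = {1..2*n-2}"
  define C1 where "C1 = subset_structure A n (n - 1)"
  define C2 where "C2 = subset_structure A (n - 1) (n - 2)"
  define I :: "((nat set + nat set) \<times> (nat set + nat set)) set"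
    where "I = (\<lambda>T. (Inr T, Inl T)) ` ksubsets A (n - 1)"
  have A: "finite A" "card A = 2*n - 2" "2*n - 1 \<notin> A" "insert (2*n - 1) A = {1..2*n - 1}"
    using assms by (auto simp: A_def)
  have arith: "n - 1 - 1 = n - 2" "2*n - 2 - (n - 1) = n - 1" "2*n - 2 - (n - 2) = n"
    using assms by auto
  have "isomorphic (DCD n) (incidence_sum C1 I C2)"
    unfolding DCD_eq_subset_structure C1_def C2_def I_def A(4)[symmetric]
    using subset_structure_insert_isomorphic_sum[OF A(1,3)] assms by simp
  moreover have "I \<subseteq> {(Inr x, Inl L) | x L. x \<in> pts C2 \<and> L \<in> lns C1}"
    by (auto simp: I_def C1_def C2_def)
  moreover have "card I = (2*n-2) choose (n-1)"
    by (simp add: I_def card_image inj_on_def n_subsets A)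
  moreover have "is_configuration C1 ((2*n-2) choose (n-2)) n ((2*n-2) choose (n-1)) (n-1)"
    using subset_structure_consecutive_is_configuration[OF A(1), of n] assms arith
      binomial_symmetric[of "n - 2" "2*n - 2"] by (simp add: C1_def A(2))
  moreover have "is_configuration C2 ((2*n-2) choose (n-1)) (n-1) ((2*n-2) choose (n-2)) n"
    using subset_structure_consecutive_is_configuration[OF A(1), of "n - 1"] assms arith
    by (simp add: C2_def A(2))
  moreover have "dual_to C1 C2"
    using subset_structure_dual[OF A(1), of n "n - 1"] assms arith by (simp add: C1_def C2_def A(2))
  moreover have "flag_transitive C1" "flag_transitive C2"
    unfolding C1_def C2_def by (simp_all add: flag_transitive_subset_structure A(1))
  ultimately show ?thesis
    unfolding valid_sum_set_def by blast
qed

end
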